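(* Let $n$ be an even positive integer such that $n'=n/2$ is odd, and let $q$ be an odd prime power coprime to $n$. Then every orbit of the permutation $\tau_{n'}$ on the set $\mathbb{Z}_n/\mu_q$ of $q$-cosets has length $2$; in particular, Type-I duadic splittings of $\mathbb{Z}_n$ given by $\tau_{n'}$ exist.
   Context: $\mathbb{Z}_n=\mathbb{Z}/n\mathbb{Z}$. $\mu_q:\mathbb{Z}_n\to\mathbb{Z}_n$, $i\mapsto qi\bmod n$; the $q$-cosets are the orbits of $\mu_q$ on $\mathbb{Z}_n$, and $\mathbb{Z}_n/\mu_q$ is the set of $q$-cosets. For $t\in\mathbb{Z}_n$ with $qt\equiv t\pmod n$, $\tau_t:\mathbb{Z}_n\to\mathbb{Z}_n$, $i\mapsto i+t\bmod n$ (a $q$-translation); it maps $q$-cosets to $q$-cosets. Type-I duadic splittings of $\mathbb{Z}_n$ given by $\tau_t$ exist if there is a $\mu_q$-invariant subset $P\subseteq\mathbb{Z}_n$ (i.e. $\mu_q(P)=P$) such that $\mathbb{Z}_n=P\cup\tau_t(P)$ is a disjoint union. *)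

theory Defs
  imports "HOL-Computational_Algebra.Primes"
begin

text \<open>Z_n is represented by the residues {0..<n} of type nat.\<close>

definition Zn :: "nat \<Rightarrow> nat set" where
  "Zn n = {0..<n}"

definition mu :: "nat \<Rightarrow> nat \<Rightarrow> nat \<Rightarrow> nat" where
  "mu n q i = (q * i) mod n"

definition qcoset :: "nat \<Rightarrow> nat \<Rightarrow> nat \<Rightarrow> nat set" where
  "qcoset n q i = {(mu n q ^^ k) i | k. True}"

definition qcosets :: "nat \<Rightarrow> nat \<Rightarrow> nat set set" where
  "qcosets n q = qcoset n q ` Zn n"

definition tau :: "nat \<Rightarrow> nat \<Rightarrow> nat \<Rightarrow> nat" where
  "tau n t i = (i + t) mod n"

definition is_q_translation :: "nat \<Rightarrow> nat \<Rightarrow> nat \<Rightarrow> bool" where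
  "is_q_translation n q t \<longleftrightarrow> t \<in> Zn n \<and> (q * t) mod n = t mod n"

definition tau_set :: "nat \<Rightarrow> nat \<Rightarrow> nat set \<Rightarrow> nat set" where
  "tau_set n t C = tau n t ` C"

definition tau_orbit :: "nat \<Rightarrow> nat \<Rightarrow> nat set \<Rightarrow> nat set set" where
  "tau_orbit n t C = {(tau_set n t ^^ k) C | k. True}"

definition prime_power :: "nat \<Rightarrow> bool" where
  "prime_power q \<longleftrightarrow> (\<exists>p k. prime p \<and> k \<ge> 1 \<and> q = p ^ k)"

definition type_I_duadic_splitting :: "nat \<Rightarrow> nat \<Rightarrow> nat \<Rightarrow> nat set \<Rightarrow> bool" where
  "type_I_duadic_splitting n q t P \<longleftrightarrow>
     is_q_translation n q t \<and> P \<subseteq> Zn n \<and> mu n q ` P = P \<and>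
     P \<union> tau n t ` P = Zn n \<and> P \<inter> tau n t ` P = {}"

end

theory Submission
  imports Defs "HOL-Number_Theory.Cong"
begin

text \<open>For even \<open>n\<close> the parity of a residue is well defined. Multiplication by an odd \<open>q\<close>
  preserves it, so every \<open>q\<close>-coset consists of residues of one parity, while translation by
  an odd \<open>n' = n/2\<close> swaps the two parities. As \<open>\<tau>\<^sub>n\<^sub>'\<close> is an involution, the orbit of a
  coset \<open>C\<close> is \<open>{C, \<tau>\<^sub>n\<^sub>'(C)}\<close> with \<open>\<tau>\<^sub>n\<^sub>'(C) \<noteq> C\<close>. The even residues form the splitting set:
  \<open>\<mu>\<^sub>q\<close> maps them injectively (since \<open>q\<close> is coprime to \<open>n\<close>) into themselves, and \<open>\<tau>\<^sub>n\<^sub>'\<close> maps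
  them onto the odd residues.\<close>

lemma funpow_involution:
  assumes "f (f x) = x"
  shows "(f ^^ k) x = (if even k then x else f x)"
  by (induction k) (use assms in auto)

lemma even_mod_iff: "even (n::nat) \<Longrightarrow> even (x mod n) \<longleftrightarrow> even x"
  by (metis dvd_mod_iff)

lemma even_mu_iff: "even n \<Longrightarrow> odd q \<Longrightarrow> even (mu n q i) \<longleftrightarrow> even i"
  unfolding mu_def by (simp add: even_mod_iff)

lemma even_tau_iff: "even n \<Longrightarrow> even (tau n t i) \<longleftrightarrow> (even i \<longleftrightarrow> even t)"
  unfolding tau_def by (simp add: even_mod_iff)

lemma tau_less: "0 < n \<Longrightarrow> tau n t i < n"
  unfolding tau_def by simp

lemma tau_half_tau_half:
  assumes "n = 2 * m" and "i < n"
  shows "tau n m (tau n m i) = i"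
proof -
  have "tau n m (tau n m i) = (i + n) mod n"
    unfolding tau_def using assms(1) by (simp add: mod_add_left_eq add.assoc mult_2)
  also have "\<dots> = i" using assms(2) by simp
  finally show ?thesis .
qed

lemma tau_set_tau_set_half:
  assumes "n = 2 * m" and "C \<subseteq> Zn n"
  shows "tau_set n m (tau_set n m C) = C"
proof -
  have "(\<lambda>x. tau n m (tau n m x)) ` C = C"
    using assms tau_half_tau_half by (auto simp: Zn_def image_iff subset_iff)
  thus ?thesis unfolding tau_set_def image_image .
qed

lemma tau_orbit_half:
  assumes "n = 2 * m" and "C \<subseteq> Zn n"
  shows "tau_orbit n m C = {C, tau_set n m C}"
  unfolding tau_orbit_def
    funpow_involution[where f = "tau_set n m", OF tau_set_tau_set_half[OF assms]]
  by (auto intro: exI[of _ 0] exI[of _ 1])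

lemma self_mem_qcoset: "i \<in> qcoset n q i"
  unfolding qcoset_def by (auto intro: exI[of _ 0])

lemma qcoset_subset_Zn:
  assumes "i \<in> Zn n"
  shows "qcoset n q i \<subseteq> Zn n"
proof -
  have "(mu n q ^^ k) i < n" for k
    using assms by (cases k) (auto simp: Zn_def mu_def)
  thus ?thesis unfolding qcoset_def Zn_def by auto
qed

lemma even_qcoset_iff:
  assumes "even n" and "odd q" and "x \<in> qcoset n q i"
  shows "even x \<longleftrightarrow> even i"
proof -
  have "even ((mu n q ^^ k) i) \<longleftrightarrow> even i" for k
    by (induction k) (simp_all add: even_mu_iff assms)
  thus ?thesis using assms(3) unfolding qcoset_def by auto
qed

lemma tau_set_half_qcoset_ne:
  assumes "n = 2 * m" and "odd m" and "odd q"
  shows "tau_set n m (qcoset n q i) \<noteq> qcoset n q i"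
proof
  assume "tau_set n m (qcoset n q i) = qcoset n q i"
  then obtain x where x: "x \<in> qcoset n q i" and i: "i = tau n m x"
    using self_mem_qcoset[of i n q] unfolding tau_set_def by (metis imageE)
  have "even x \<longleftrightarrow> even i" using even_qcoset_iff[OF _ assms(3) x] assms(1) by simp
  moreover have "even i \<longleftrightarrow> odd x" using even_tau_iff[of n m x] assms(1,2) i by simp
  ultimately show False by simp
qed

lemma card_tau_orbit_half_qcoset:
  assumes "n = 2 * m" and "odd m" and "odd q" and "C \<in> qcosets n q"
  shows "card (tau_orbit n m C) = 2"
proof -
  obtain i where i: "i \<in> Zn n" and C: "C = qcoset n q i"
    using assms(4) unfolding qcosets_def by blast
  show ?thesis
    using tau_orbit_half[OF assms(1) qcoset_subset_Zn[OF i]]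
      tau_set_half_qcoset_ne[OF assms(1-3), of i] C by (simp add: card_2_iff)
qed

lemma inj_on_mu_Zn:
  assumes "coprime q n"
  shows "inj_on (mu n q) (Zn n)"
proof
  fix x y assume "x \<in> Zn n" "y \<in> Zn n" "mu n q x = mu n q y"
  hence "[q * x = q * y] (mod n)" "x < n" "y < n" unfolding mu_def cong_def Zn_def by auto
  hence "[x = y] (mod n)" using assms cong_mult_lcancel_nat by blast
  thus "x = y" using \<open>x < n\<close> \<open>y < n\<close> unfolding cong_def by simp
qed

lemma mu_image_evens:
  assumes "even n" and "odd q" and "coprime q n"
  shows "mu n q ` {i \<in> Zn n. even i} = {i \<in> Zn n. even i}"
proof (rule card_subset_eq)
  show "mu n q ` {i \<in> Zn n. even i} \<subseteq> {i \<in> Zn n. even i}"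
    using assms(1,2) even_mu_iff by (fastforce simp: Zn_def mu_def)
  show "card (mu n q ` {i \<in> Zn n. even i}) = card {i \<in> Zn n. even i}"
    by (rule card_image) (use inj_on_mu_Zn[OF assms(3)] in \<open>auto intro: inj_on_subset\<close>)
qed (simp add: Zn_def)

lemma tau_half_image_evens:
  assumes "n = 2 * m" and "odd m"
  shows "tau n m ` {i \<in> Zn n. even i} = {i \<in> Zn n. odd i}"
proof -
  have pos: "0 < n" using assms by (cases m) auto
  have flip: "even (tau n m i) \<longleftrightarrow> odd i" for i
    using even_tau_iff[of n m i] assms by simp
  show ?thesis
  proof (intro equalityI subsetI)
    fix j assume "j \<in> {i \<in> Zn n. odd i}"
    hence "tau n m j \<in> {i \<in> Zn n. even i}" and "tau n m (tau n m j) = j"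
      using flip tau_less[OF pos] tau_half_tau_half[OF assms(1)] by (auto simp: Zn_def)
    thus "j \<in> tau n m ` {i \<in> Zn n. even i}" by (metis image_eqI)
  qed (use flip tau_less[OF pos] in \<open>auto simp: Zn_def\<close>)
qed

lemma is_q_translation_half:
  assumes "n = 2 * m" and "0 < n" and "odd q"
  shows "is_q_translation n q m"
proof -
  obtain a where "q = 2 * a + 1" using assms(3) oddE by blast
  hence "q * m = a * n + m" using assms(1) by simp
  thus ?thesis unfolding is_q_translation_def Zn_def using assms(1,2) by simp
qed

lemma type_I_duadic_splitting_evens:
  assumes "n = 2 * m" and "0 < n" and "odd m" and "odd q" and "coprime q n"
  shows "type_I_duadic_splitting n q m {i \<in> Zn n. even i}"
  unfolding type_I_duadic_splitting_def
  using is_q_translation_half[OF assms(1,2,4)] mu_image_evens[of n q]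
    tau_half_image_evens[OF assms(1,3)] assms
  by (auto simp: Zn_def)

theorem theorem4p5:
  fixes n q :: nat
  assumes "n > 0" and "even n" and "odd (n div 2)"
    and "prime_power q" and "odd q" and "coprime q n"
  shows "(\<forall>C \<in> qcosets n q. card (tau_orbit n (n div 2) C) = 2)
         \<and> (\<exists>P. type_I_duadic_splitting n q (n div 2) P)"
proof -
  have n: "n = 2 * (n div 2)" using assms(2) by simp
  show ?thesis
    using card_tau_orbit_half_qcoset[OF n assms(3,5)]
      type_I_duadic_splitting_evens[OF n assms(1,3,5,6)] by blast
qed

end
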